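(* Let $\Omega\subset\mathbb{R}^N$ be a domain satisfying condition $(\mathrm{S}_r)$ for some $r>0$. For each $x_0\in\partial\Omega$, with $a,b$ as in $(\mathrm{S}_r)$ for $x_0$, define $\vec p(x_0)=\frac{b-a}{|b-a|}$ (this is well defined). Then $|\vec p(x_0)-\vec p(y_0)|\le\frac1r|x_0-y_0|$ for all $x_0,y_0\in\partial\Omega$.
   Context: A domain is an open connected set. $B_r(a)$ denotes the open Euclidean ball. Condition $(\mathrm{S}_r)$: for every $x_0\in\partial\Omega$ there exist $a,b\in\mathbb{R}^N$ such that $B_r(a)\subset\Omega$, $B_r(b)\subset\mathbb{R}^N\setminus\bar\Omega$ and $|x_0-a|=|x_0-b|=r$. *)

theory Defs
  imports "HOL-Analysis.Analysis"
begin

definition domain :: "'a::euclidean_space set \<Rightarrow> bool" where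
  "domain \<Omega> \<longleftrightarrow> open \<Omega> \<and> connected \<Omega>"

definition Sr_balls :: "real \<Rightarrow> 'a::euclidean_space set \<Rightarrow> 'a \<Rightarrow> 'a \<Rightarrow> 'a \<Rightarrow> bool" where
  "Sr_balls r \<Omega> x0 a b \<longleftrightarrow>
     ball a r \<subseteq> \<Omega> \<and> ball b r \<subseteq> - closure \<Omega> \<and> dist x0 a = r \<and> dist x0 b = r"

definition cond_S :: "real \<Rightarrow> 'a::euclidean_space set \<Rightarrow> bool" where
  "cond_S r \<Omega> \<longleftrightarrow> (\<forall>x0\<in>frontier \<Omega>. \<exists>a b. Sr_balls r \<Omega> x0 a b)"

definition pvec :: "real \<Rightarrow> 'a::euclidean_space set \<Rightarrow> 'a \<Rightarrow> 'a" where
  "pvec r \<Omega> x0 = (SOME v. \<exists>a b. Sr_balls r \<Omega> x0 a b \<and> v = (b - a) /\<^sub>R norm (b - a))"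

end

theory Submission
  imports Defs
begin

text \<open>
  An interior and an exterior ball of radius r are disjoint, so their centres are at least 2r
  apart. At a boundary point x0 with balls a, b of condition (S_r) this forces x0 to be the
  midpoint of a and b, so p(x0) = (x0 - a)/r. Comparing the interior ball at x0 with the
  exterior ball at y0 and vice versa, the parallelogram law turns the two separation inequalities
  into |(x0 - a) - (y0 - a')| \<le> |x0 - y0|; for x0 = y0 this also shows that a, and hence p(x0),
  does not depend on the choice of the balls.
\<close>

lemma parallelogram_law:
  fixes x y :: "'a::real_inner"
  shows "norm (x + y)^2 + norm (x - y)^2 = 2 * norm x ^ 2 + 2 * norm y ^ 2"
  by (simp add: power2_norm_eq_inner inner_add_left inner_add_right
      inner_diff_left inner_diff_right inner_commute)

lemma dist_ge_if_disjoint_balls: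
  fixes c e :: "'a::real_normed_vector"
  assumes "ball c r \<inter> ball e r = {}"
  shows "2 * r \<le> dist c e"
proof (rule ccontr)
  assume "\<not> 2 * r \<le> dist c e"
  then have "midpoint c e \<in> ball c r \<inter> ball e r"
    by (simp add: dist_midpoint)
  with assms show False
    by blast
qed

text \<open>Here u, w are the radius vectors x0 - a, y0 - a' and d = x0 - y0; the hypotheses say that
  the interior ball at each point is far from the exterior ball at the other.\<close>

lemma norm_diff_le_if_far_apart:
  fixes d u w :: "'a::real_inner"
  assumes "norm u = r" "norm w = r"
    and "2 * r \<le> norm (d + (u + w))" "2 * r \<le> norm (d - (u + w))"
  shows "norm (u - w) \<le> norm d"
proof -
  have "r \<ge> 0"
    using assms(1) by (metis norm_ge_zero)
  then have "(2 * r)^2 \<le> norm (d + (u + w))^2" "(2 * r)^2 \<le> norm (d - (u + w))^2"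
    using assms(3,4) by (intro power_mono; simp)+
  moreover have "norm (u + w)^2 + norm (u - w)^2 = (2 * r)^2"
    using parallelogram_law[of u w] assms(1,2) by (simp add: power_mult_distrib)
  ultimately have "norm (u - w)^2 \<le> norm d ^ 2"
    using parallelogram_law[of d "u + w"] by linarith
  then show ?thesis
    using norm_ge_zero power2_le_imp_le by blast
qed

lemma Sr_balls_centres_dist:
  assumes "Sr_balls r \<Omega> x0 a b" "Sr_balls r \<Omega> y0 a' b'"
  shows "2 * r \<le> dist a b'"
proof (rule dist_ge_if_disjoint_balls)
  show "ball a r \<inter> ball b' r = {}"
    using assms closure_subset unfolding Sr_balls_def by blast
qed

lemma Sr_balls_midpoint:
  assumes "Sr_balls r \<Omega> x0 a b"
  shows "b - x0 = x0 - a"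
proof -
  have "norm (b - x0) = r" "norm (x0 - a) = r"
    using assms by (metis Sr_balls_def dist_commute dist_norm)+
  moreover have "2 * r \<le> norm (0 + ((b - x0) + (x0 - a)))"
    using Sr_balls_centres_dist[OF assms assms] by (simp add: dist_norm norm_minus_commute[of b a])
  moreover have "2 * r \<le> norm (0 - ((b - x0) + (x0 - a)))"
    using Sr_balls_centres_dist[OF assms assms] by (simp add: dist_norm)
  ultimately have "norm ((b - x0) - (x0 - a)) \<le> norm (0 :: 'a)"
    by (rule norm_diff_le_if_far_apart)
  then show ?thesis
    by simp
qed

lemma Sr_balls_inner_centres_lipschitz:
  assumes "Sr_balls r \<Omega> x0 a b" "Sr_balls r \<Omega> y0 a' b'"
  shows "norm ((x0 - a) - (y0 - a')) \<le> dist x0 y0"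
proof -
  have b: "b = x0 + (x0 - a)" and b': "b' = y0 + (y0 - a')"
    using assms by (metis Sr_balls_midpoint add.commute diff_add_cancel)+
  have "norm (x0 - a) = r" "norm (y0 - a') = r"
    using assms by (simp_all add: Sr_balls_def dist_norm)
  moreover have "2 * r \<le> norm ((x0 - y0) + ((x0 - a) + (y0 - a')))"
  proof -
    have "dist a' b = norm ((x0 - y0) + ((x0 - a) + (y0 - a')))"
      using b by (simp only: dist_norm norm_minus_commute[of a']) (simp add: algebra_simps)
    then show ?thesis
      using Sr_balls_centres_dist[OF assms(2,1)] by simp
  qed
  moreover have "2 * r \<le> norm ((x0 - y0) - ((x0 - a) + (y0 - a')))"
  proof -
    have "dist a b' = norm ((x0 - y0) - ((x0 - a) + (y0 - a')))"
      using b' by (simp only: dist_norm) (simp add: algebra_simps)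
    then show ?thesis
      using Sr_balls_centres_dist[OF assms] by simp
  qed
  ultimately have "norm ((x0 - a) - (y0 - a')) \<le> norm (x0 - y0)"
    by (rule norm_diff_le_if_far_apart)
  then show ?thesis
    by (simp add: dist_norm)
qed

lemma Sr_balls_unit_vector:
  assumes "Sr_balls r \<Omega> x0 a b"
  shows "(b - a) /\<^sub>R norm (b - a) = (x0 - a) /\<^sub>R r"
proof -
  have "b - a = 2 *\<^sub>R (x0 - a)"
    using Sr_balls_midpoint[OF assms] by (simp add: algebra_simps scaleR_2)
  moreover have "norm (x0 - a) = r"
    using assms by (simp add: Sr_balls_def dist_norm)
  ultimately show ?thesis
    by simp
qed

lemma pvec_eq:
  assumes "Sr_balls r \<Omega> x0 a b"
  shows "pvec r \<Omega> x0 = (x0 - a) /\<^sub>R r"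
  unfolding pvec_def
proof (rule someI2)
  show "\<exists>a' b'. Sr_balls r \<Omega> x0 a' b' \<and> (x0 - a) /\<^sub>R r = (b' - a') /\<^sub>R norm (b' - a')"
    using assms Sr_balls_unit_vector[OF assms] by metis
next
  fix v
  assume "\<exists>a' b'. Sr_balls r \<Omega> x0 a' b' \<and> v = (b' - a') /\<^sub>R norm (b' - a')"
  then obtain a' b' where "Sr_balls r \<Omega> x0 a' b'" "v = (x0 - a') /\<^sub>R r"
    using Sr_balls_unit_vector by metis
  moreover from this(1) have "a' = a"
    using Sr_balls_inner_centres_lipschitz[OF assms] by fastforce
  ultimately show "v = (x0 - a) /\<^sub>R r"
    by simp
qed

theorem lemma2p2:
  fixes \<Omega> :: "'a::euclidean_space set" and r :: real
  assumes "domain \<Omega>" and "r > 0" and "cond_S r \<Omega>"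
  shows "(\<forall>x0\<in>frontier \<Omega>. \<forall>a b. Sr_balls r \<Omega> x0 a b \<longrightarrow>
            pvec r \<Omega> x0 = (b - a) /\<^sub>R norm (b - a))
     \<and> (\<forall>x0\<in>frontier \<Omega>. \<forall>y0\<in>frontier \<Omega>.
            norm (pvec r \<Omega> x0 - pvec r \<Omega> y0) \<le> dist x0 y0 / r)"
proof (intro conjI ballI allI impI)
  fix x0 a b
  assume "Sr_balls r \<Omega> x0 a b"
  then show "pvec r \<Omega> x0 = (b - a) /\<^sub>R norm (b - a)"
    by (simp add: pvec_eq Sr_balls_unit_vector)
next
  fix x0 y0
  assume "x0 \<in> frontier \<Omega>" "y0 \<in> frontier \<Omega>"
  then obtain a b a' b' where balls: "Sr_balls r \<Omega> x0 a b" "Sr_balls r \<Omega> y0 a' b'"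
    using assms(3) unfolding cond_S_def by blast
  have "norm (pvec r \<Omega> x0 - pvec r \<Omega> y0) = norm ((x0 - a) - (y0 - a')) / r"
    using assms(2)
    by (simp add: pvec_eq[OF balls(1)] pvec_eq[OF balls(2)] divide_inverse_commute
        flip: scaleR_diff_right)
  also have "\<dots> \<le> dist x0 y0 / r"
    using Sr_balls_inner_centres_lipschitz[OF balls] assms(2) by (simp add: divide_right_mono)
  finally show "norm (pvec r \<Omega> x0 - pvec r \<Omega> y0) \<le> dist x0 y0 / r" .
qed

end
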